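(* Let $T=(V,E,\gamma,\mathrm{p})$ be a fault tree, run Algorithm $\mathtt{SFPA}$ on $T$, and for $v\in V$ let $g_{v,\infty}$ denote the final value of $g_v$ (i.e. $\mathrm{p}(v)$ if $v$ is a basic event, and otherwise the value of $g_v$ after the substitution loop at $v$ has finished). Let $\mathcal I_v=\{w\in V\mid w\prec v\prec\mathrm{id}(w)\}$. Then $g_{v,\infty}=\langle U(T_v[\mathcal I_v])\rangle$.
   Context: A fault tree (FT) is a tuple $T=(V,E,\gamma,\mathrm{p})$ where $(V,E)$ is a rooted directed acyclic graph (edges point from a node to its children; root $R_T$), $\gamma\colon V\to\{\mathtt{OR},\mathtt{AND},\mathtt{BE}\}$ with $\gamma(v)=\mathtt{BE}$ iff $v$ is a leaf, and $\mathrm{p}\colon\mathrm{BE}(T)\to[0,1]$. A partially controllable fault tree (PCFT) is defined the same way except that $\gamma$ may also take the value $\mathtt{CBE}$ (leaves have label $\mathtt{BE}$ or $\mathtt{CBE}$), and $\mathrm{p}$ is defined on $\mathrm{BE}(T)=\{v\mid\gamma(v)=\mathtt{BE}\}$; let $\mathrm{CBE}(T)=\{v\mid\gamma(v)=\mathtt{CBE}\}$. The structure function $S_T(v,\vec f,\vec c)$ ($\vec f\in\{0,1\}^{\mathrm{BE}(T)}$, $\vec c\in\{0,1\}^{\mathrm{CBE}(T)}$) is $f_v$ on $\mathtt{BE}$, $c_v$ on $\mathtt{CBE}$, disjunction over children on $\mathtt{OR}$, conjunction over children on $\mathtt{AND}$. With $\vec F$ having independent coordinates, $\mathbb P(F_v=1)=\mathrm{p}(v)$,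 the unreliability is $U(T)\colon\{0,1\}^{\mathrm{CBE}(T)}\to[0,1]$, $U(T)(\vec c)=\mathbb P(S_T(R_T,\vec F,\vec c)=1)$. Constructions: $T_v$ is the FT consisting of all descendants of $v$ (including $v$) with root $v$ and inherited structure. For $I\subseteq V$, $T[I]$ is the PCFT obtained by setting $\gamma(w)=\mathtt{CBE}$ and removing all outgoing edges for each $w\in I$, and then keeping only the nodes reachable from the root. Order and dominators: $x\preceq y$ iff there is a directed path (possibly of length $0$) from $y$ to $x$; $x\prec y$ iff $x\preceq y$, $x\neq y$. $w$ dominates $v$ if $v\prec w$ and every path from $R_T$ to $v$ contains $w$. For $v\neq R_T$, $\mathrm{id}(v)$ is the unique dominator of $v$ with $\mathrm{id}(v)\preceq w'$ for all dominators $w'$ of $v$. Squarefree polynomial algebra: $\mathcal A(X)$ for finite $X$ consists of formal sums $\sum_{Y\subseteq X}\alpha_Y\prod_{x\in Y}\mathsf F_x$ with polynomial arithmetic subject to $\mathsf F_x^2=\mathsf F_x$; $\mathcal A(X)\subseteq\mathcal A(X')$ for $X\subseteq X'$. For $x\in X\setminus Y$, $\alpha\in\mathcal A(X)$, $\beta\in\mathcal A(Y)$, the substitution $\alpha[\mathsf F_x\mapsto\beta]=\beta\cdot\sum_{Z\ni x}\alpha_Z\prod_{x'\in Z\setminus\{x\}}\mathsf F_{x'}+\sum_{Z\not\ni x}\alpha_Z\prod_{x'\in Z}\mathsf F_{x'}$. For $g\colon\{0,1\}^X\to\mathbb R$, $\langle g\rangle$ is the unique element of $\mathcal A(X)$ with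 $g(\vec c)=\langle g\rangle[\forall x\colon\mathsf F_x\mapsto c_x]$ for all $\vec c$. Algorithm $\mathtt{SFPA}(T)$: set $\mathsf{ToDo}\leftarrow V$. While $\mathsf{ToDo}\neq\varnothing$: pick $v\in\mathsf{ToDo}$ minimal w.r.t. $\preceq$ and remove it. If $\gamma(v)=\mathtt{BE}$, set $g_v\leftarrow\mathrm{p}(v)$. Otherwise set $g_v\leftarrow 1-\prod_{w\in\mathrm{ch}(v)}(1-\mathsf F_w)$ if $\gamma(v)=\mathtt{OR}$, and $g_v\leftarrow\prod_{w\in\mathrm{ch}(v)}\mathsf F_w$ if $\gamma(v)=\mathtt{AND}$ ($\mathrm{ch}(v)$ = children of $v$); then set $\mathsf{ToDo}_v\leftarrow\{w\in V\mid\mathrm{id}(w)=v\}$ and, while $\mathsf{ToDo}_v\neq\varnothing$, pick $w\in\mathsf{ToDo}_v$ maximal w.r.t. $\preceq$, remove it, and set $g_v\leftarrow g_v[\mathsf F_w\mapsto g_w]$. Return $g_{R_T}$. *)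

theory Defs
  imports Complex_Main
begin

datatype gate = OR | AND | BE | CBE

record 'v ft =
  nodes :: "'v set"
  edges :: "('v \<times> 'v) set"   \<comment> \<open>edges point from a node to its children\<close>
  root  :: 'v
  gam   :: "'v \<Rightarrow> gate"
  prob  :: "'v \<Rightarrow> real"

definition children :: "'v ft \<Rightarrow> 'v \<Rightarrow> 'v set" where
  "children T v = {w. (v, w) \<in> edges T}"

definition is_pcft :: "'v ft \<Rightarrow> bool" where
  "is_pcft T \<longleftrightarrow>
     finite (nodes T) \<and> edges T \<subseteq> nodes T \<times> nodes T \<and> acyclic (edges T) \<and>
     root T \<in> nodes T \<and> (\<forall>v\<in>nodes T. (root T, v) \<in> (edges T)\<^sup>*) \<and>
     (\<forall>v\<in>nodes T. gam T v \<in> {BE, CBE} \<longleftrightarrow> children T v = {}) \<and>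
     (\<forall>v\<in>nodes T. gam T v = BE \<longrightarrow> 0 \<le> prob T v \<and> prob T v \<le> 1)"

definition is_ft :: "'v ft \<Rightarrow> bool" where
  "is_ft T \<longleftrightarrow> is_pcft T \<and> (\<forall>v\<in>nodes T. gam T v \<noteq> CBE)"

definition BEs :: "'v ft \<Rightarrow> 'v set" where
  "BEs T = {v \<in> nodes T. gam T v = BE}"

definition CBEs :: "'v ft \<Rightarrow> 'v set" where
  "CBEs T = {v \<in> nodes T. gam T v = CBE}"

text \<open>Structure function: fails T F C v means S_T(v, F, C) = 1, where F is the set of
  failed basic events and C the set of activated controllable basic events (0/1 vectors as sets).
  Defined as the least fixed point of the defining equations (which on a finite DAG is the
  unique solution of the recursive definition).\<close>
inductive fails :: "'v ft \<Rightarrow> 'v set \<Rightarrow> 'v set \<Rightarrow> 'v \<Rightarrow> bool" for T F C where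
  fails_BE:  "v \<in> nodes T \<Longrightarrow> gam T v = BE \<Longrightarrow> v \<in> F \<Longrightarrow> fails T F C v"
| fails_CBE: "v \<in> nodes T \<Longrightarrow> gam T v = CBE \<Longrightarrow> v \<in> C \<Longrightarrow> fails T F C v"
| fails_OR:  "v \<in> nodes T \<Longrightarrow> gam T v = OR \<Longrightarrow> (v, w) \<in> edges T \<Longrightarrow> fails T F C w \<Longrightarrow> fails T F C v"
| fails_AND: "v \<in> nodes T \<Longrightarrow> gam T v = AND \<Longrightarrow> (\<forall>w. (v, w) \<in> edges T \<longrightarrow> fails T F C w)
              \<Longrightarrow> fails T F C v"

text \<open>Unreliability U(T)(C) = P(S_T(R_T, F, C) = 1) with independent basic events,
  written out as a finite sum over the set A of failed basic events.\<close>
definition unrel :: "'v ft \<Rightarrow> 'v set \<Rightarrow> real" where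
  "unrel T C = (\<Sum>A\<in>Pow (BEs T).
      (\<Prod>v\<in>A. prob T v) * (\<Prod>v\<in>BEs T - A. 1 - prob T v) *
      (if fails T A C (root T) then 1 else 0))"

definition subtree :: "'v ft \<Rightarrow> 'v \<Rightarrow> 'v ft" where
  "subtree T v = (let D = {w. (v, w) \<in> (edges T)\<^sup>*} in
     T\<lparr>nodes := D, edges := {(a, b) \<in> edges T. a \<in> D}, root := v\<rparr>)"

definition restrict_cut :: "'v ft \<Rightarrow> 'v set \<Rightarrow> 'v ft" where
  "restrict_cut T I = (let E' = {(a, b) \<in> edges T. a \<notin> I};
                  N = {w. (root T, w) \<in> E'\<^sup>*} in
     T\<lparr>nodes := N, edges := {(a, b) \<in> E'. a \<in> N},
       gam := (\<lambda>w. if w \<in> I then CBE else gam T w)\<rparr>)"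

definition ple :: "'v ft \<Rightarrow> 'v \<Rightarrow> 'v \<Rightarrow> bool" where
  "ple T x y \<longleftrightarrow> (y, x) \<in> (edges T)\<^sup>*"

definition plt :: "'v ft \<Rightarrow> 'v \<Rightarrow> 'v \<Rightarrow> bool" where
  "plt T x y \<longleftrightarrow> ple T x y \<and> x \<noteq> y"

definition is_path :: "'v ft \<Rightarrow> 'v list \<Rightarrow> 'v \<Rightarrow> 'v \<Rightarrow> bool" where
  "is_path T xs a b \<longleftrightarrow> xs \<noteq> [] \<and> hd xs = a \<and> last xs = b \<and>
     (\<forall>i. Suc i < length xs \<longrightarrow> (xs ! i, xs ! Suc i) \<in> edges T)"

definition dominates :: "'v ft \<Rightarrow> 'v \<Rightarrow> 'v \<Rightarrow> bool" where
  "dominates T w v \<longleftrightarrow> plt T v w \<and> (\<forall>xs. is_path T xs (root T) v \<longrightarrow> w \<in> set xs)"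

text \<open>Immediate dominator (meaningful for v \<noteq> root).\<close>
definition idom :: "'v ft \<Rightarrow> 'v \<Rightarrow> 'v" where
  "idom T v = (THE w. dominates T w v \<and> (\<forall>w'. dominates T w' v \<longrightarrow> ple T w w'))"

definition Iset :: "'v ft \<Rightarrow> 'v \<Rightarrow> 'v set" where
  "Iset T v = {w \<in> nodes T. plt T w v \<and> plt T v (idom T w)}"

text \<open>An element of A(X) is represented by its coefficient function Y \<mapsto> \<alpha>_Y
  (coefficient of the monomial \<Prod>_{x\<in>Y} F_x).\<close>
type_synonym 'v sfpoly = "'v set \<Rightarrow> real"

definition inA :: "'v set \<Rightarrow> 'v sfpoly \<Rightarrow> bool" where
  "inA X \<alpha> \<longleftrightarrow> (\<forall>Y. \<alpha> Y \<noteq> 0 \<longrightarrow> Y \<subseteq> X)"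

definition pconst :: "real \<Rightarrow> 'v sfpoly" where
  "pconst a = (\<lambda>Y. if Y = {} then a else 0)"

definition pvar :: "'v \<Rightarrow> 'v sfpoly" where
  "pvar x = (\<lambda>Y. if Y = {x} then 1 else 0)"

definition padd :: "'v sfpoly \<Rightarrow> 'v sfpoly \<Rightarrow> 'v sfpoly" where
  "padd \<alpha> \<beta> = (\<lambda>Y. \<alpha> Y + \<beta> Y)"

definition psub :: "'v sfpoly \<Rightarrow> 'v sfpoly \<Rightarrow> 'v sfpoly" where
  "psub \<alpha> \<beta> = (\<lambda>Y. \<alpha> Y - \<beta> Y)"

text \<open>Product: polynomial multiplication subject to F_x^2 = F_x, i.e. monomials multiply by union.\<close>
definition pmult :: "'v sfpoly \<Rightarrow> 'v sfpoly \<Rightarrow> 'v sfpoly" where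
  "pmult \<alpha> \<beta> = (\<lambda>Z. \<Sum>Y1\<in>Pow Z. \<Sum>Y2\<in>Pow Z. if Y1 \<union> Y2 = Z then \<alpha> Y1 * \<beta> Y2 else 0)"

definition pprod :: "('v \<Rightarrow> 'v sfpoly) \<Rightarrow> 'v set \<Rightarrow> 'v sfpoly" where
  "pprod f A = Finite_Set.fold (\<lambda>w acc. pmult (f w) acc) (pconst 1) A"

text \<open>Substitution \<alpha>[F_x \<mapsto> \<beta>].\<close>
definition psubst :: "'v sfpoly \<Rightarrow> 'v \<Rightarrow> 'v sfpoly \<Rightarrow> 'v sfpoly" where
  "psubst \<alpha> x \<beta> = padd (pmult \<beta> (\<lambda>Z. if x \<notin> Z then \<alpha> (insert x Z) else 0))
                         (\<lambda>Z. if x \<in> Z then 0 else \<alpha> Z)"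

text \<open>\<alpha>[\<forall>x\<in>X. F_x \<mapsto> c_x] for the 0/1 vector c given by the set C \<subseteq> X of its 1-entries.\<close>
definition peval :: "'v set \<Rightarrow> 'v sfpoly \<Rightarrow> 'v set \<Rightarrow> real" where
  "peval X \<alpha> C = (\<Sum>Y\<in>Pow X. \<alpha> Y * (\<Prod>x\<in>Y. if x \<in> C then 1 else 0))"

definition poly_of :: "'v set \<Rightarrow> ('v set \<Rightarrow> real) \<Rightarrow> 'v sfpoly" where
  "poly_of X g = (THE \<alpha>. inA X \<alpha> \<and> (\<forall>C. C \<subseteq> X \<longrightarrow> peval X \<alpha> C = g C))"

section \<open>Algorithm SFPA (all possible runs, i.e. all admissible choices)\<close>

definition init_poly :: "'v ft \<Rightarrow> 'v \<Rightarrow> 'v sfpoly" where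
  "init_poly T v = (if gam T v = OR
      then psub (pconst 1) (pprod (\<lambda>w. psub (pconst 1) (pvar w)) (children T v))
      else pprod pvar (children T v))"

definition ToDo_v :: "'v ft \<Rightarrow> 'v \<Rightarrow> 'v set" where
  "ToDo_v T v = {w \<in> nodes T. w \<noteq> root T \<and> idom T w = v}"

text \<open>Inner loop: inner_run T g S acc res: starting with g_v = acc and ToDo_v = S,
  repeatedly pick a maximal w and substitute; res is the final g_v.\<close>
inductive inner_run :: "'v ft \<Rightarrow> ('v \<Rightarrow> 'v sfpoly) \<Rightarrow> 'v set \<Rightarrow> 'v sfpoly \<Rightarrow> 'v sfpoly \<Rightarrow> bool"
  for T g where
  inner_done: "inner_run T g {} acc acc"
| inner_step: "w \<in> S \<Longrightarrow> (\<forall>u\<in>S. \<not> plt T w u) \<Longrightarrow>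
     inner_run T g (S - {w}) (psubst acc w (g w)) res \<Longrightarrow> inner_run T g S acc res"

text \<open>Outer loop: sfpa_run T ToDo g g': from state (ToDo, g) the algorithm can
  terminate with the family of final values g'.\<close>
inductive sfpa_run :: "'v ft \<Rightarrow> 'v set \<Rightarrow> ('v \<Rightarrow> 'v sfpoly) \<Rightarrow> ('v \<Rightarrow> 'v sfpoly) \<Rightarrow> bool"
  for T where
  sfpa_done: "sfpa_run T {} g g"
| sfpa_BE: "v \<in> ToDo \<Longrightarrow> (\<forall>u\<in>ToDo. \<not> plt T u v) \<Longrightarrow> gam T v = BE \<Longrightarrow>
     sfpa_run T (ToDo - {v}) (g(v := pconst (prob T v))) g' \<Longrightarrow> sfpa_run T ToDo g g'"
| sfpa_gate: "v \<in> ToDo \<Longrightarrow> (\<forall>u\<in>ToDo. \<not> plt T u v) \<Longrightarrow> gam T v \<noteq> BE \<Longrightarrow>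
     inner_run T g (ToDo_v T v) (init_poly T v) h \<Longrightarrow>
     sfpa_run T (ToDo - {v}) (g(v := h)) g' \<Longrightarrow> sfpa_run T ToDo g g'"

end

theory Submission
  imports Defs
begin

(* Every substitution g_v[F_w := g_w] of SFPA is a Shannon expansion: at a 0/1 point it evaluates
   to g_w * g_v|(F_w = 1) + (1 - g_w) * g_v|(F_w = 0).  The unreliability obeys the same expansion
   when the controllable event w of T_v[J] is replaced by T_w[I_w]: as v is the immediate dominator
   of w and w is substituted before the nodes below it, every node of T_w[I_w] is dominated by w,
   so its basic events are disjoint from those of T_v[J] and the failure of w is independent of
   the rest.  Hence g_v keeps evaluating to U(T_v[I_v \<union> S]), S being the part of ToDo_v not yet
   substituted; initially T_v[I_v \<union> ToDo_v] consists of v and its children only.  Finally, a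
   squarefree polynomial is determined by its values at the 0/1 points. *)

section \<open>Squarefree polynomials\<close>

lemma prod_indicator:
  "finite Y \<Longrightarrow> (\<Prod>x\<in>Y. if x \<in> C then 1 else 0 :: real) = (if Y \<subseteq> C then 1 else 0)"
  by (induction Y rule: finite_induct) auto

lemma prod_one_minus_indicator:
  "finite Y \<Longrightarrow> (\<Prod>x\<in>Y. 1 - (if x \<in> C then 1 else 0 :: real)) = (if Y \<inter> C = {} then 1 else 0)"
  by (induction Y rule: finite_induct) auto

lemma peval_altdef:
  "finite X \<Longrightarrow> peval X a C = (\<Sum>Y\<in>Pow X. a Y * (if Y \<subseteq> C then 1 else 0))"
  unfolding peval_def by (intro sum.cong refl) (auto simp: prod_indicator finite_subset)

lemma peval_eq_sum_Pow: "finite X \<Longrightarrow> C \<subseteq> X \<Longrightarrow> peval X a C = (\<Sum>Y\<in>Pow C. a Y)"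
  unfolding peval_altdef by (rule sum.mono_neutral_cong_right) auto

lemma pmult_eq_sum_Pow:
  assumes "finite X" "Z \<subseteq> X"
  shows "pmult a b Z = (\<Sum>Y1\<in>Pow X. \<Sum>Y2\<in>Pow X. if Y1 \<union> Y2 = Z then a Y1 * b Y2 else 0)"
  unfolding pmult_def
proof (rule sum.mono_neutral_cong_left)
  fix Y1 assume "Y1 \<in> Pow Z"
  show "(\<Sum>Y2\<in>Pow Z. if Y1 \<union> Y2 = Z then a Y1 * b Y2 else 0) =
        (\<Sum>Y2\<in>Pow X. if Y1 \<union> Y2 = Z then a Y1 * b Y2 else 0)"
    by (rule sum.mono_neutral_cong_left) (use assms in auto)
qed (use assms in \<open>auto intro!: sum.neutral\<close>)

lemma peval_mult:
  assumes X: "finite X"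
  shows "peval X (pmult a b) C = peval X a C * peval X b C"
proof -
  let ?i = "\<lambda>Y. (if Y \<subseteq> C then 1 else 0 :: real)"
  have "peval X (pmult a b) C =
     (\<Sum>Z\<in>Pow X. (\<Sum>Y1\<in>Pow X. \<Sum>Y2\<in>Pow X. if Y1 \<union> Y2 = Z then a Y1 * b Y2 else 0) * ?i Z)"
    unfolding peval_altdef[OF X] by (intro sum.cong refl) (simp add: pmult_eq_sum_Pow[OF X])
  also have "\<dots> = (\<Sum>Z\<in>Pow X. \<Sum>Y1\<in>Pow X. \<Sum>Y2\<in>Pow X.
      if Y1 \<union> Y2 = Z then a Y1 * b Y2 * ?i (Y1 \<union> Y2) else 0)"
    by (auto simp: sum_distrib_right intro!: sum.cong)
  also have "\<dots> = (\<Sum>Y1\<in>Pow X. \<Sum>Y2\<in>Pow X. \<Sum>Z\<in>Pow X.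
      if Y1 \<union> Y2 = Z then a Y1 * b Y2 * ?i (Y1 \<union> Y2) else 0)"
    by (subst sum.swap) (auto intro!: sum.cong sum.swap)
  also have "\<dots> = (\<Sum>Y1\<in>Pow X. \<Sum>Y2\<in>Pow X. a Y1 * b Y2 * ?i (Y1 \<union> Y2))"
  proof (intro sum.cong refl)
    fix Y1 Y2 assume "Y1 \<in> Pow X" "Y2 \<in> Pow X"
    then have "Y1 \<union> Y2 \<in> Pow X" by auto
    then show "(\<Sum>Z\<in>Pow X. if Y1 \<union> Y2 = Z then a Y1 * b Y2 * ?i (Y1 \<union> Y2) else 0) =
        a Y1 * b Y2 * ?i (Y1 \<union> Y2)"
      using X by (simp add: sum.delta)
  qed
  also have "\<dots> = (\<Sum>Y1\<in>Pow X. a Y1 * ?i Y1) * (\<Sum>Y2\<in>Pow X. b Y2 * ?i Y2)"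
    by (auto simp: sum_product intro!: sum.cong)
  finally show ?thesis by (simp add: peval_altdef[OF X])
qed

lemma peval_const:
  assumes "finite X"
  shows "peval X (pconst c) C = c"
proof -
  have "peval X (pconst c) C = (\<Sum>Y\<in>Pow X. if Y = {} then c else 0)"
    unfolding peval_altdef[OF assms] pconst_def by (rule sum.cong) auto
  then show ?thesis using assms by (simp add: sum.delta')
qed

lemma peval_var:
  assumes "finite X" "x \<in> X"
  shows "peval X (pvar x) C = (if x \<in> C then 1 else 0)"
proof -
  have "peval X (pvar x) C = (\<Sum>Y\<in>Pow X. if Y = {x} then (if x \<in> C then 1 else 0) else 0)"
    unfolding peval_altdef[OF assms(1)] pvar_def by (rule sum.cong) auto
  then show ?thesis using assms by (simp add: sum.delta')
qed

lemma peval_add: "peval X (padd a b) C = peval X a C + peval X b C"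
  unfolding peval_def padd_def by (simp add: distrib_right sum.distrib)

lemma peval_psub: "peval X (psub a b) C = peval X a C - peval X b C"
  unfolding peval_def psub_def by (simp add: left_diff_distrib sum_subtractf)

text \<open>Moebius inversion: \<open>peval X a C = (\<Sum>Y\<in>Pow C. a Y)\<close> determines \<open>a\<close> by induction
  along \<open>\<subset>\<close>.\<close>
lemma peval_eq_imp_coeff_eq:
  assumes X: "finite X" and eq: "\<And>C. C \<subseteq> X \<Longrightarrow> peval X a C = peval X b C" and "Y \<subseteq> X"
  shows "a Y = b Y"
proof -
  have "finite Y" using \<open>Y \<subseteq> X\<close> X finite_subset by auto
  from this \<open>Y \<subseteq> X\<close> show ?thesis
  proof (induction Y rule: finite_psubset_induct)
    case (psubset Y)
    have "(\<Sum>Y'\<in>Pow Y. a Y') = (\<Sum>Y'\<in>Pow Y. b Y')"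
      using eq[of Y] psubset peval_eq_sum_Pow[OF X] by simp
    moreover have "(\<Sum>Y'\<in>Pow Y - {Y}. a Y') = (\<Sum>Y'\<in>Pow Y - {Y}. b Y')"
      by (rule sum.cong[OF refl]) (use psubset in auto)
    ultimately show ?case
      using psubset by (simp add: sum.remove[of "Pow Y" Y])
  qed
qed

lemma poly_of_eq:
  assumes X: "finite X" and a: "inA X a" and ev: "\<And>C. C \<subseteq> X \<Longrightarrow> peval X a C = g C"
  shows "poly_of X g = a"
  unfolding poly_of_def
proof (rule the_equality)
  fix b assume b: "inA X b \<and> (\<forall>C. C \<subseteq> X \<longrightarrow> peval X b C = g C)"
  show "b = a"
  proof
    fix Y show "b Y = a Y"
    proof (cases "Y \<subseteq> X")
      case True
      have "\<And>C. C \<subseteq> X \<Longrightarrow> peval X b C = peval X a C" using b ev by metis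
      then show ?thesis by (rule peval_eq_imp_coeff_eq[OF X _ True])
    next
      case False
      then show ?thesis using a b unfolding inA_def by metis
    qed
  qed
qed (use a ev in simp)

lemma pmult_comm: "pmult a b = pmult b a"
  unfolding pmult_def
  by (rule ext, subst sum.swap) (auto simp: Un_commute mult.commute intro!: sum.cong)

lemma pmult_assoc: "pmult a (pmult b c) = pmult (pmult a b) c"
proof
  fix Z
  show "pmult a (pmult b c) Z = pmult (pmult a b) c Z"
  proof (cases "finite Z")
    case True
    show ?thesis
      by (rule peval_eq_imp_coeff_eq[OF True, of _ _ Z]) (simp_all add: peval_mult[OF True])
  qed (simp add: pmult_def)
qed

lemma comp_fun_commute_pmult: "comp_fun_commute (\<lambda>w acc. pmult (f w) acc)"
  unfolding comp_fun_commute_def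
  by (auto simp: fun_eq_iff pmult_assoc pmult_comm[of "f _" "f _"])

lemma pprod_empty [simp]: "pprod f {} = pconst 1"
  unfolding pprod_def by simp

lemma pprod_insert:
  assumes "finite A" "x \<notin> A"
  shows "pprod f (insert x A) = pmult (f x) (pprod f A)"
proof -
  interpret comp_fun_commute "\<lambda>w acc. pmult (f w) acc" by (rule comp_fun_commute_pmult)
  show ?thesis using assms unfolding pprod_def by simp
qed

lemma peval_pprod:
  assumes "finite X" "finite A"
  shows "peval X (pprod f A) C = (\<Prod>x\<in>A. peval X (f x) C)"
  using assms(2)
  by (induction A rule: finite_induct)
    (simp_all add: peval_const[OF assms(1)] pprod_insert peval_mult[OF assms(1)])

lemma inA_mono: "inA X a \<Longrightarrow> X \<subseteq> Y \<Longrightarrow> inA Y a"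
  unfolding inA_def by blast

lemma inA_const: "inA {} (pconst c)"
  unfolding inA_def pconst_def by auto

lemma inA_var: "inA {x} (pvar x)"
  unfolding inA_def pvar_def by auto

lemma inA_add: "inA X a \<Longrightarrow> inA Y b \<Longrightarrow> inA (X \<union> Y) (padd a b)"
  unfolding inA_def padd_def by (metis add.right_neutral le_supI1 le_supI2)

lemma inA_sub: "inA X a \<Longrightarrow> inA Y b \<Longrightarrow> inA (X \<union> Y) (psub a b)"
  unfolding inA_def psub_def by (metis diff_zero le_supI1 le_supI2)

lemma inA_mult:
  assumes a: "inA X a" and b: "inA Y b"
  shows "inA (X \<union> Y) (pmult a b)"
  unfolding inA_def
proof (intro allI impI)
  fix Z assume "pmult a b Z \<noteq> 0"
  then obtain Y1 where "(\<Sum>Y2\<in>Pow Z. if Y1 \<union> Y2 = Z then a Y1 * b Y2 else 0) \<noteq> 0"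
    unfolding pmult_def by (meson sum.not_neutral_contains_not_neutral)
  then obtain Y2 where "(if Y1 \<union> Y2 = Z then a Y1 * b Y2 else 0) \<noteq> 0"
    using sum.not_neutral_contains_not_neutral by blast
  then show "Z \<subseteq> X \<union> Y" using a b unfolding inA_def by (auto split: if_splits)
qed

lemma inA_pprod: "finite A \<Longrightarrow> (\<And>x. x \<in> A \<Longrightarrow> inA X (f x)) \<Longrightarrow> inA X (pprod f A)"
proof (induction A rule: finite_induct)
  case empty then show ?case using inA_const inA_mono by fastforce
next
  case (insert x F)
  then show ?case using inA_mult[of X "f x" X "pprod f F"] by (simp add: pprod_insert)
qed

lemma inA_psubst:
  assumes a: "inA X a" and b: "inA Y b"
  shows "inA ((X - {w}) \<union> Y) (psubst a w b)"
proof -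
  have "inA (X - {w}) (\<lambda>Z. if w \<notin> Z then a (insert w Z) else 0)"
    and "inA (X - {w}) (\<lambda>Z. if w \<in> Z then 0 else a Z)"
    using a unfolding inA_def by auto
  then show ?thesis
    unfolding psubst_def by (rule inA_mono[OF inA_add[OF inA_mult[OF b]]]) auto
qed

lemma peval_superset: "inA X a \<Longrightarrow> X \<subseteq> Y \<Longrightarrow> finite Y \<Longrightarrow> peval Y a C = peval X a C"
  unfolding peval_def inA_def
  by (rule sum.mono_neutral_cong_right) auto

lemma peval_split_var:
  assumes X: "finite X" and w: "w \<in> X"
  shows "peval X a D = (if w \<in> D then peval X (\<lambda>Z. if w \<notin> Z then a (insert w Z) else 0) D else 0)
             + peval X (\<lambda>Z. if w \<in> Z then 0 else a Z) D"
proof -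
  let ?i = "\<lambda>Y. (if Y \<subseteq> D then 1 else 0 :: real)"
  have "peval X a D = (\<Sum>Y\<in>{Y\<in>Pow X. w \<in> Y}. a Y * ?i Y) + (\<Sum>Y\<in>{Y\<in>Pow X. w \<notin> Y}. a Y * ?i Y)"
  proof -
    have "peval X a D = (\<Sum>Y\<in>{Y\<in>Pow X. w \<in> Y} \<union> {Y\<in>Pow X. w \<notin> Y}. a Y * ?i Y)"
      unfolding peval_altdef[OF X] by (rule sum.cong) auto
    also have "\<dots> = (\<Sum>Y\<in>{Y\<in>Pow X. w \<in> Y}. a Y * ?i Y) + (\<Sum>Y\<in>{Y\<in>Pow X. w \<notin> Y}. a Y * ?i Y)"
      by (rule sum.union_disjoint) (use X in auto)
    finally show ?thesis .
  qed
  moreover have "(\<Sum>Y\<in>{Y\<in>Pow X. w \<notin> Y}. a Y * ?i Y) = peval X (\<lambda>Z. if w \<in> Z then 0 else a Z) D"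
    unfolding peval_altdef[OF X] by (rule sum.mono_neutral_cong_left) (use X in force)+
  moreover have "(\<Sum>Y\<in>{Y\<in>Pow X. w \<in> Y}. a Y * ?i Y) =
      (\<Sum>Z\<in>{Z\<in>Pow X. w \<notin> Z}. a (insert w Z) * ?i (insert w Z))"
    by (rule sum.reindex_bij_witness[of _ "insert w" "\<lambda>Y. Y - {w}"])
      (use w in \<open>auto simp: insert_absorb\<close>)
  moreover have "\<dots> = (if w \<in> D then (\<Sum>Z\<in>{Z\<in>Pow X. w \<notin> Z}. a (insert w Z) * ?i Z) else 0)"
    by (cases "w \<in> D") (auto intro!: sum.cong)
  moreover have "(\<Sum>Z\<in>{Z\<in>Pow X. w \<notin> Z}. a (insert w Z) * ?i Z) =
      peval X (\<lambda>Z. if w \<notin> Z then a (insert w Z) else 0) D"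
    unfolding peval_altdef[OF X] by (rule sum.mono_neutral_cong_left) (use X in force)+
  ultimately show ?thesis by simp
qed

lemma peval_indep_var:
  assumes "finite X" and "\<And>Z. w \<in> Z \<Longrightarrow> a Z = 0"
  shows "peval X a D = peval X a (D - {w})"
  unfolding peval_altdef[OF assms(1)] by (rule sum.cong) (use assms(2) in auto)

lemma peval_psubst:
  assumes X: "finite X" and w: "w \<in> X"
  shows "peval X (psubst a w b) C =
    peval X b C * peval X a (insert w C) + (1 - peval X b C) * peval X a (C - {w})"
proof -
  define a1 where "a1 = (\<lambda>Z. if w \<notin> Z then a (insert w Z) else 0)"
  define a0 where "a0 = (\<lambda>Z. if w \<in> Z then 0 else a Z)"
  have indep: "peval X a1 D = peval X a1 (C - {w})" "peval X a0 D = peval X a0 (C - {w})"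
    if "D - {w} = C - {w}" for D
    using that peval_indep_var[OF X, of w a1 D] peval_indep_var[OF X, of w a0 D]
    by (simp_all add: a1_def a0_def)
  have split: "peval X a D = (if w \<in> D then peval X a1 D else 0) + peval X a0 D" for D
    unfolding a1_def a0_def by (rule peval_split_var[OF X w])
  have "psubst a w b = padd (pmult b a1) a0"
    unfolding psubst_def a1_def a0_def by simp
  then have "peval X (psubst a w b) C = peval X b C * peval X a1 (C - {w}) + peval X a0 (C - {w})"
    using indep[of C] by (simp add: peval_add peval_mult[OF X])
  also have "\<dots> = peval X b C * peval X a (insert w C) + (1 - peval X b C) * peval X a (C - {w})"
    using split[of "insert w C"] split[of "C - {w}"] indep[of "insert w C"]
    by (simp add: algebra_simps)
  finally show ?thesis .
qed

section \<open>Failure and unreliability\<close>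

lemma fails_nodes: "fails T A C x \<Longrightarrow> x \<in> nodes T"
  by (induction rule: fails.induct) auto

lemma fails_mono: "fails T A C x \<Longrightarrow> A \<subseteq> A' \<Longrightarrow> fails T A' C x"
  by (induction rule: fails.induct) (auto intro: fails.intros)

lemma fails_Int_BEs_iff: "fails T (A \<inter> BEs T) C x \<longleftrightarrow> fails T A C x"
proof
  show "fails T A C x \<Longrightarrow> fails T (A \<inter> BEs T) C x"
    by (induction rule: fails.induct) (auto intro: fails.intros simp: BEs_def)
qed (erule fails_mono, simp)

lemma fails_cong_BEs:
  assumes "A \<inter> BEs T = A' \<inter> BEs T"
  shows "fails T A C x \<longleftrightarrow> fails T A' C x"
proof -
  have "fails T A C x \<longleftrightarrow> fails T (A \<inter> BEs T) C x" by (rule fails_Int_BEs_iff[symmetric])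
  also have "\<dots> \<longleftrightarrow> fails T A' C x" unfolding assms by (rule fails_Int_BEs_iff)
  finally show ?thesis .
qed

definition weight :: "('v \<Rightarrow> real) \<Rightarrow> 'v set \<Rightarrow> 'v set \<Rightarrow> real" where
  "weight p B A = (\<Prod>x\<in>A. p x) * (\<Prod>x\<in>B - A. 1 - p x)"

lemma unrel_eq_sum_weight:
  "unrel T C = (\<Sum>A\<in>Pow (BEs T). weight (prob T) (BEs T) A * (if fails T A C (root T) then 1 else 0))"
  unfolding unrel_def weight_def by simp

lemma sum_weight: "finite B \<Longrightarrow> (\<Sum>A\<in>Pow B. weight p B A) = 1"
  unfolding weight_def using prod_add[of B p "\<lambda>x. 1 - p x"] by simp

lemma sum_weight_if:
  assumes "finite B"
  shows "(\<Sum>A\<in>Pow B. weight p B A * (if P A then x else y)) =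
    (\<Sum>A\<in>Pow B. weight p B A * (if P A then 1 else 0)) * x +
    (1 - (\<Sum>A\<in>Pow B. weight p B A * (if P A then 1 else 0))) * y"
proof -
  have "(\<Sum>A\<in>Pow B. weight p B A * (if P A then x else y)) =
    (\<Sum>A\<in>Pow B. weight p B A * (if P A then 1 else 0) * x +
       (weight p B A - weight p B A * (if P A then 1 else 0)) * y)"
    by (rule sum.cong) auto
  then show ?thesis
    by (simp add: sum.distrib sum_distrib_right[symmetric] sum_subtractf sum_weight[OF assms])
qed

lemma sum_Pow_Un:
  assumes "finite X" "finite Y" "X \<inter> Y = {}"
  shows "(\<Sum>A\<in>Pow (X \<union> Y). h A) = (\<Sum>A1\<in>Pow X. \<Sum>A2\<in>Pow Y. h (A1 \<union> A2))"
proof -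
  have "(\<Sum>A1\<in>Pow X. \<Sum>A2\<in>Pow Y. h (A1 \<union> A2)) = (\<Sum>(A1, A2)\<in>Pow X \<times> Pow Y. h (A1 \<union> A2))"
    by (rule sum.cartesian_product)
  also have "\<dots> = (\<Sum>A\<in>Pow (X \<union> Y). h A)"
    by (rule sum.reindex_bij_witness[of _ "\<lambda>A. (A \<inter> X, A \<inter> Y)" "\<lambda>(a, b). a \<union> b"]) (use assms in auto)
  finally show ?thesis by simp
qed

lemma weight_Un:
  assumes "finite X" "finite Y" "X \<inter> Y = {}" "A1 \<subseteq> X" "A2 \<subseteq> Y"
  shows "weight p (X \<union> Y) (A1 \<union> A2) = weight p X A1 * weight p Y A2"
proof -
  have "finite A1" "finite A2" using assms(1,2,4,5) finite_subset by blast+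
  have "(X \<union> Y) - (A1 \<union> A2) = (X - A1) \<union> (Y - A2)" using assms by auto
  moreover have "(\<Prod>x\<in>A1 \<union> A2. p x) = (\<Prod>x\<in>A1. p x) * (\<Prod>x\<in>A2. p x)"
    by (rule prod.union_disjoint) (use assms \<open>finite A1\<close> \<open>finite A2\<close> in auto)
  moreover have "(\<Prod>x\<in>(X - A1) \<union> (Y - A2). 1 - p x) = (\<Prod>x\<in>X - A1. 1 - p x) * (\<Prod>x\<in>Y - A2. 1 - p x)"
    by (rule prod.union_disjoint) (use assms in auto)
  ultimately show ?thesis unfolding weight_def by (simp add: ac_simps)
qed

text \<open>Independence of disjoint families of basic events.\<close>
lemma sum_weight_Un:
  assumes "finite X" "finite Y" "X \<inter> Y = {}"
  shows "(\<Sum>A\<in>Pow (X \<union> Y). weight p (X \<union> Y) A * f A) =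
    (\<Sum>A2\<in>Pow Y. weight p Y A2 * (\<Sum>A1\<in>Pow X. weight p X A1 * f (A1 \<union> A2)))"
proof -
  have "(\<Sum>A\<in>Pow (X \<union> Y). weight p (X \<union> Y) A * f A) =
    (\<Sum>A1\<in>Pow X. \<Sum>A2\<in>Pow Y. weight p X A1 * (weight p Y A2 * f (A1 \<union> A2)))"
    unfolding sum_Pow_Un[OF assms] by (intro sum.cong refl) (simp add: weight_Un[OF assms])
  then show ?thesis
    by (subst (asm) sum.swap) (simp add: sum_distrib_left mult.left_commute)
qed

lemma sum_weight_marginal:
  assumes B: "finite B" and B0: "B0 \<subseteq> B" and f: "\<And>A. A \<subseteq> B \<Longrightarrow> f A = f (A \<inter> B0)"
  shows "(\<Sum>A\<in>Pow B. weight p B A * f A) = (\<Sum>A\<in>Pow B0. weight p B0 A * f A)"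
proof -
  have fin: "finite B0" "finite (B - B0)" using B B0 finite_subset by auto
  have "B = B0 \<union> (B - B0)" using B0 by auto
  then have "(\<Sum>A\<in>Pow B. weight p B A * f A) =
    (\<Sum>A2\<in>Pow (B - B0). weight p (B - B0) A2 * (\<Sum>A1\<in>Pow B0. weight p B0 A1 * f (A1 \<union> A2)))"
    using sum_weight_Un[OF fin, of p f] by auto
  also have "\<dots> = (\<Sum>A2\<in>Pow (B - B0). weight p (B - B0) A2 * (\<Sum>A1\<in>Pow B0. weight p B0 A1 * f A1))"
  proof (intro sum.cong refl arg_cong2[where f = "(*)"])
    fix A1 A2 assume "A2 \<in> Pow (B - B0)" "A1 \<in> Pow B0"
    then have "(A1 \<union> A2) \<inter> B0 = A1" "A1 \<union> A2 \<subseteq> B" using B0 by auto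
    then show "f (A1 \<union> A2) = f A1" using f[of "A1 \<union> A2"] by simp
  qed
  also have "\<dots> = (\<Sum>A\<in>Pow B0. weight p B0 A * f A)"
    by (simp add: sum_distrib_right[symmetric] sum_weight[OF fin(2)])
  finally show ?thesis .
qed

section \<open>Paths and dominators\<close>

locale fault_tree =
  fixes T :: "'v ft"
  assumes is_ft: "is_ft T"
begin

abbreviation "E \<equiv> edges T"
abbreviation "N \<equiv> nodes T"
abbreviation "r \<equiv> root T"

lemma finite_N: "finite N"
  and E_subset: "E \<subseteq> N \<times> N"
  and acyclic_E: "acyclic E"
  and reachable_from_root: "x \<in> N \<Longrightarrow> (r, x) \<in> E\<^sup>*"
  and leaf_iff: "x \<in> N \<Longrightarrow> gam T x \<in> {BE, CBE} \<longleftrightarrow> children T x = {}"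
  and not_CBE: "x \<in> N \<Longrightarrow> gam T x \<noteq> CBE"
  using is_ft unfolding is_ft_def is_pcft_def by auto

lemma finite_E: "finite E"
  using finite_N E_subset by (meson finite_SigmaI finite_subset)

lemma wf_converse_E: "wf (E\<inverse>)"
  using finite_acyclic_wf_converse[OF finite_E acyclic_E] .

lemma wf_trancl_E: "wf (E\<^sup>+)"
  using finite_acyclic_wf[OF finite_E acyclic_E] by (rule wf_trancl)

lemma edge_nodes: "(a, b) \<in> E \<Longrightarrow> a \<in> N \<and> b \<in> N"
  using E_subset by auto

lemma rtrancl_nodes: "(a, b) \<in> E\<^sup>* \<Longrightarrow> a \<in> N \<Longrightarrow> b \<in> N"
  by (induction rule: rtrancl_induct) (auto dest: edge_nodes)

lemma trancl_nodes: "(a, b) \<in> E\<^sup>+ \<Longrightarrow> a \<in> N \<and> b \<in> N"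
  by (induction rule: trancl_induct) (auto dest: edge_nodes)

lemma irrefl_trancl_E: "(a, a) \<notin> E\<^sup>+"
  using acyclic_E unfolding acyclic_def by blast

lemma trancl_E_asym: "(a, b) \<in> E\<^sup>+ \<Longrightarrow> (b, a) \<in> E\<^sup>* \<Longrightarrow> False"
  using irrefl_trancl_E by (meson trancl_rtrancl_trancl)

lemma antisym_rtrancl_E: "(a, b) \<in> E\<^sup>* \<Longrightarrow> (b, a) \<in> E\<^sup>* \<Longrightarrow> a = b"
  using trancl_E_asym by (metis rtrancl_eq_or_trancl)

lemma trancl_not_root: "(a, x) \<in> E\<^sup>+ \<Longrightarrow> x \<noteq> r"
  using reachable_from_root trancl_nodes trancl_E_asym by blast

lemma plt_iff: "plt T x y \<longleftrightarrow> (y, x) \<in> E\<^sup>+"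
  unfolding plt_def ple_def using irrefl_trancl_E by (auto simp: rtrancl_eq_or_trancl)

lemma ple_iff: "ple T x y \<longleftrightarrow> (y, x) \<in> E\<^sup>*"
  unfolding ple_def by simp

text \<open>A path from \<open>a\<close> to \<open>b\<close> avoids \<open>d\<close> iff \<open>b\<close> is reachable from \<open>a\<close> in the graph without \<open>d\<close>.\<close>
definition E_avoid :: "'v \<Rightarrow> ('v \<times> 'v) set" where
  "E_avoid d = {(p, q) \<in> E. p \<noteq> d \<and> q \<noteq> d}"

lemma is_path_Cons_Cons:
  "is_path T (x # y # ys) a b \<longleftrightarrow> a = x \<and> (x, y) \<in> E \<and> is_path T (y # ys) y b"
  unfolding is_path_def by (auto simp: All_less_Suc2 less_Suc_eq_0_disj)

lemma is_path_rtrancl_E_avoid: "is_path T xs a b \<Longrightarrow> d \<notin> set xs \<Longrightarrow> (a, b) \<in> (E_avoid d)\<^sup>*"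
proof (induction xs arbitrary: a rule: induct_list012)
  case (3 x y ys)
  then have "(x, y) \<in> E_avoid d" "(y, b) \<in> (E_avoid d)\<^sup>*" "a = x"
    by (auto simp: is_path_Cons_Cons E_avoid_def)
  then show ?case by (meson converse_rtrancl_into_rtrancl)
qed (auto simp: is_path_def)

lemma rtrancl_E_avoid_is_path:
  "(a, b) \<in> (E_avoid d)\<^sup>* \<Longrightarrow> a \<noteq> d \<Longrightarrow> \<exists>xs. is_path T xs a b \<and> d \<notin> set xs"
proof (induction rule: converse_rtrancl_induct)
  case base
  have "is_path T [b] b b" by (simp add: is_path_def)
  then show ?case using base by force
next
  case (step a y)
  then have "y \<noteq> d" "(a, y) \<in> E" by (auto simp: E_avoid_def)
  then obtain xs where xs: "is_path T xs y b" "d \<notin> set xs" using step by auto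
  then obtain ys where "xs = y # ys" unfolding is_path_def by (cases xs) auto
  then show ?case
    using xs step \<open>(a, y) \<in> E\<close> by (intro exI[of _ "a # xs"]) (auto simp: is_path_Cons_Cons)
qed

lemma E_avoid_subset: "E_avoid d \<subseteq> E"
  unfolding E_avoid_def by auto

lemma rtrancl_E_avoid_from: "(d, b) \<in> (E_avoid d)\<^sup>* \<Longrightarrow> b = d"
  by (induction rule: rtrancl_induct) (auto simp: E_avoid_def)

lemma dominates_iff: "dominates T d x \<longleftrightarrow> (d, x) \<in> E\<^sup>+ \<and> (r, x) \<notin> (E_avoid d)\<^sup>*"
proof -
  have "(\<forall>xs. is_path T xs r x \<longrightarrow> d \<in> set xs) \<longleftrightarrow> (r, x) \<notin> (E_avoid d)\<^sup>*" if "d \<noteq> x"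
  proof -
    have "(r, x) \<in> (E_avoid d)\<^sup>* \<Longrightarrow> r \<noteq> d" using rtrancl_E_avoid_from that by blast
    then show ?thesis using rtrancl_E_avoid_is_path is_path_rtrancl_E_avoid by blast
  qed
  then show ?thesis unfolding dominates_def plt_iff using irrefl_trancl_E by blast
qed

lemma rtrancl_E_avoid_or_through:
  "(a, b) \<in> R\<^sup>* \<Longrightarrow> R \<subseteq> E \<Longrightarrow> (a, b) \<in> (E_avoid d)\<^sup>* \<or> (a, d) \<in> R\<^sup>* \<and> (d, b) \<in> R\<^sup>*"
proof (induction rule: rtrancl_induct)
  case (step y z)
  show ?case
  proof (cases "(a, y) \<in> (E_avoid d)\<^sup>* \<and> y \<noteq> d \<and> z \<noteq> d")
    case True
    then have "(y, z) \<in> E_avoid d" using step unfolding E_avoid_def by blast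
    then show ?thesis using True by (meson rtrancl.rtrancl_into_rtrancl)
  next
    case False
    then have "(a, d) \<in> R\<^sup>* \<and> (d, y) \<in> R\<^sup>* \<or> y = d \<or> z = d" using step.IH step.prems by blast
    then show ?thesis using step.hyps by (meson rtrancl.rtrancl_into_rtrancl rtrancl.rtrancl_refl)
  qed
qed simp

lemma rtrancl_E_avoid_if_not_through:
  "(a, b) \<in> E\<^sup>* \<Longrightarrow> \<not> ((a, d) \<in> E\<^sup>* \<and> (d, b) \<in> E\<^sup>*) \<Longrightarrow> (a, b) \<in> (E_avoid d)\<^sup>*"
  using rtrancl_E_avoid_or_through[of a b E d] by blast

lemma rtrancl_E_avoid_below:
  assumes "(a, b) \<in> E\<^sup>*" and "(d, a) \<in> E\<^sup>+"
  shows "(a, b) \<in> (E_avoid d)\<^sup>*"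
  using rtrancl_E_avoid_if_not_through[OF assms(1)] trancl_E_asym[OF assms(2)] by blast

lemma rtrancl_E_avoid_above:
  assumes "(a, b) \<in> E\<^sup>*" and "(b, d) \<in> E\<^sup>+"
  shows "(a, b) \<in> (E_avoid d)\<^sup>*"
  using rtrancl_E_avoid_if_not_through[OF assms(1)] trancl_E_asym[OF assms(2)] by blast

lemma rtrancl_E_avoid_not_to: "(a, b) \<in> E\<^sup>* \<Longrightarrow> (d, b) \<notin> E\<^sup>* \<Longrightarrow> (a, b) \<in> (E_avoid d)\<^sup>*"
  using rtrancl_E_avoid_if_not_through by blast

lemma rtrancl_E_avoid_not_from: "(a, b) \<in> E\<^sup>* \<Longrightarrow> (a, d) \<notin> E\<^sup>* \<Longrightarrow> (a, b) \<in> (E_avoid d)\<^sup>*"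
  using rtrancl_E_avoid_if_not_through by blast

lemma dominates_ancestor:
  assumes "dominates T d x" and "(w, x) \<in> E\<^sup>*" and "(d, w) \<in> E\<^sup>+"
  shows "dominates T d w"
proof -
  have "(w, x) \<in> (E_avoid d)\<^sup>*" using rtrancl_E_avoid_below assms(2,3) .
  moreover have "(r, x) \<notin> (E_avoid d)\<^sup>*" using assms(1) by (simp add: dominates_iff)
  ultimately have "(r, w) \<notin> (E_avoid d)\<^sup>*" by (meson rtrancl_trans)
  then show ?thesis using assms(3) by (simp add: dominates_iff)
qed

lemma root_dominates:
  assumes "x \<in> N" and "x \<noteq> r"
  shows "dominates T r x"
proof -
  have "(r, x) \<in> E\<^sup>+" using rtranclD[OF reachable_from_root[OF assms(1)]] assms(2) by blast
  moreover have "(r, x) \<notin> (E_avoid r)\<^sup>*" using rtrancl_E_avoid_from assms(2) by blast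
  ultimately show ?thesis by (simp add: dominates_iff)
qed

lemma dominators_comparable:
  assumes "dominates T d1 x" and "dominates T d2 x"
  shows "(d1, d2) \<in> E\<^sup>* \<or> (d2, d1) \<in> E\<^sup>*"
proof (rule ccontr)
  assume incomparable: "\<not> ((d1, d2) \<in> E\<^sup>* \<or> (d2, d1) \<in> E\<^sup>*)"
  have d2x: "(d2, x) \<in> E\<^sup>+" and "(r, x) \<notin> (E_avoid d1)\<^sup>*"
    using assms by (auto simp: dominates_iff)
  moreover have "(r, d2) \<in> (E_avoid d1)\<^sup>*"
    using rtrancl_E_avoid_not_to[OF reachable_from_root] trancl_nodes[OF d2x] incomparable by blast
  moreover have "(d2, x) \<in> (E_avoid d1)\<^sup>*"
    using rtrancl_E_avoid_not_from[OF trancl_into_rtrancl[OF d2x]] incomparable by blast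
  ultimately show False by (meson rtrancl_trans)
qed

text \<open>By well-foundedness there is a lowest dominator; it is the least one in the sense of
  \<open>idom_def\<close> because the dominators of a node are totally ordered.\<close>
lemma idom_spec:
  assumes "x \<in> N" "x \<noteq> r"
  shows "dominates T (idom T x) x \<and> (\<forall>d. dominates T d x \<longrightarrow> ple T (idom T x) d)"
proof -
  let ?D = "{d. dominates T d x}"
  have wf: "wf ((E\<^sup>+)\<inverse>)"
    using wf_trancl[OF wf_converse_E] by (simp add: trancl_converse)
  have "r \<in> ?D" using root_dominates[OF assms] by simp
  then obtain d0 where d0: "d0 \<in> ?D" "\<And>d. (d, d0) \<in> (E\<^sup>+)\<inverse> \<Longrightarrow> d \<notin> ?D"
    using wf[unfolded wf_eq_minimal, rule_format, OF \<open>r \<in> ?D\<close>] by blast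
  have least: "ple T d0 d" if "dominates T d x" for d
  proof -
    have "(d0, d) \<in> E\<^sup>* \<or> (d, d0) \<in> E\<^sup>*" using dominators_comparable d0(1) that by blast
    then show ?thesis
    proof
      assume "(d0, d) \<in> E\<^sup>*"
      then have "d0 = d \<or> (d0, d) \<in> E\<^sup>+" by (meson rtranclD)
      then show ?thesis using d0(2)[of d] that unfolding ple_iff by auto
    qed (simp add: ple_iff)
  qed
  have d0_spec: "dominates T d0 x \<and> (\<forall>d. dominates T d x \<longrightarrow> ple T d0 d)"
    using d0(1) least by simp
  have "idom T x = d0"
    unfolding idom_def
  proof (rule the1_equality[OF ex1I[of _ d0]])
    fix d assume "dominates T d x \<and> (\<forall>d'. dominates T d' x \<longrightarrow> ple T d d')"
    then have "(d, d0) \<in> E\<^sup>*" "(d0, d) \<in> E\<^sup>*"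
      using least[of d] d0(1) by (simp_all add: ple_iff)
    then show "d = d0" by (rule antisym_rtrancl_E)
  qed (use d0_spec in simp_all)
  then show ?thesis using d0_spec by simp
qed

lemma idom_dominates: "x \<in> N \<Longrightarrow> x \<noteq> r \<Longrightarrow> dominates T (idom T x) x"
  using idom_spec by simp

lemma idom_least: "x \<in> N \<Longrightarrow> x \<noteq> r \<Longrightarrow> dominates T d x \<Longrightarrow> (d, idom T x) \<in> E\<^sup>*"
  using idom_spec by (simp add: ple_iff)

lemma idom_above: "x \<in> N \<Longrightarrow> x \<noteq> r \<Longrightarrow> (idom T x, x) \<in> E\<^sup>+"
  using idom_dominates[of x] by (simp add: dominates_iff)

lemma idom_avoid: "x \<in> N \<Longrightarrow> x \<noteq> r \<Longrightarrow> (r, x) \<notin> (E_avoid (idom T x))\<^sup>*"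
  using idom_dominates[of x] by (simp add: dominates_iff)

end

section \<open>Cut trees\<close>

context fault_tree
begin

definition cut_edges :: "'v set \<Rightarrow> ('v \<times> 'v) set" where
  "cut_edges I = {(a, b) \<in> E. a \<notin> I}"

text \<open>\<open>T[I]\<close> before discarding the unreachable nodes; every \<open>T\<^sub>v[I]\<close> is a part of it.\<close>
definition cut_tree :: "'v set \<Rightarrow> 'v ft" where
  "cut_tree I = T\<lparr>edges := cut_edges I, gam := (\<lambda>x. if x \<in> I then CBE else gam T x)\<rparr>"

abbreviation cut_subtree :: "'v \<Rightarrow> 'v set \<Rightarrow> 'v ft" where
  "cut_subtree v I \<equiv> restrict_cut (subtree T v) I"

definition cut_reach :: "'v \<Rightarrow> 'v set \<Rightarrow> 'v set" where
  "cut_reach v I = {x. (v, x) \<in> (cut_edges I)\<^sup>*}"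

lemma cut_tree_simps [simp]:
  "nodes (cut_tree I) = N" "edges (cut_tree I) = cut_edges I"
  "gam (cut_tree I) = (\<lambda>x. if x \<in> I then CBE else gam T x)"
  unfolding cut_tree_def by simp_all

lemma rtrancl_cut_edges: "(a, b) \<in> (cut_edges I)\<^sup>* \<Longrightarrow> (a, b) \<in> E\<^sup>*"
  using rtrancl_mono[of "cut_edges I" E] unfolding cut_edges_def by blast

lemma cut_reach_self [simp]: "v \<in> cut_reach v I"
  unfolding cut_reach_def by simp

lemma cut_reach_step: "x \<in> cut_reach v I \<Longrightarrow> (x, y) \<in> cut_edges I \<Longrightarrow> y \<in> cut_reach v I"
  unfolding cut_reach_def by (simp add: rtrancl.rtrancl_into_rtrancl)

lemma cut_reach_trans: "x \<in> cut_reach a K \<Longrightarrow> y \<in> cut_reach x K \<Longrightarrow> y \<in> cut_reach a K"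
  unfolding cut_reach_def by (meson mem_Collect_eq rtrancl_trans)

lemma cut_reach_rtrancl: "x \<in> cut_reach a K \<Longrightarrow> (a, x) \<in> E\<^sup>*"
  unfolding cut_reach_def using rtrancl_cut_edges by blast

lemma cut_reach_nodes: "v \<in> N \<Longrightarrow> cut_reach v I \<subseteq> N"
  using cut_reach_rtrancl rtrancl_nodes by blast

lemma finite_cut_reach: "v \<in> N \<Longrightarrow> finite (cut_reach v I)"
  using cut_reach_nodes finite_N finite_subset by blast

lemma cut_reach_antimono: "K1 \<subseteq> K2 \<Longrightarrow> cut_reach a K2 \<subseteq> cut_reach a K1"
  unfolding cut_reach_def cut_edges_def by (auto elim!: rtrancl_mono[THEN subsetD, rotated])

lemma cut_reach_cong:
  assumes "\<forall>y. (a, y) \<in> E\<^sup>* \<longrightarrow> (y \<in> K1 \<longleftrightarrow> y \<in> K2)"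
  shows "cut_reach a K1 = cut_reach a K2"
proof -
  have "x \<in> cut_reach a K2" if "x \<in> cut_reach a K1" "\<forall>y. (a, y) \<in> E\<^sup>* \<longrightarrow> (y \<in> K1 \<longleftrightarrow> y \<in> K2)"
    for x K1 K2
    using that unfolding cut_reach_def mem_Collect_eq
  proof (induction rule: rtrancl_induct)
    case (step y z)
    then have "(y, z) \<in> cut_edges K2" using rtrancl_cut_edges by (auto simp: cut_edges_def)
    then show ?case using step by (meson rtrancl.rtrancl_into_rtrancl)
  qed simp
  then show ?thesis using assms by blast
qed

lemma cut_subtree_nodes: "nodes (cut_subtree v I) = cut_reach v I"
proof -
  define D where "D = {w. (v, w) \<in> E\<^sup>*}"
  define E' where "E' = {(a, b) \<in> E. a \<in> D \<and> a \<notin> I}"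
  have "nodes (cut_subtree v I) = {w. (v, w) \<in> E'\<^sup>*}"
    unfolding restrict_cut_def subtree_def E'_def D_def Let_def by simp
  moreover have "(v, w) \<in> E'\<^sup>* \<longleftrightarrow> (v, w) \<in> (cut_edges I)\<^sup>*" for w
  proof
    assume "(v, w) \<in> E'\<^sup>*"
    moreover have "E' \<subseteq> cut_edges I" unfolding E'_def cut_edges_def by auto
    ultimately show "(v, w) \<in> (cut_edges I)\<^sup>*" using rtrancl_mono by blast
  next
    assume "(v, w) \<in> (cut_edges I)\<^sup>*"
    then show "(v, w) \<in> E'\<^sup>*"
    proof (induction rule: rtrancl_induct)
      case (step y z)
      then have "(y, z) \<in> E'"
        using rtrancl_cut_edges unfolding E'_def D_def cut_edges_def by auto
      then show ?case using step by (meson rtrancl.rtrancl_into_rtrancl)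
    qed simp
  qed
  ultimately show ?thesis unfolding cut_reach_def by blast
qed

lemma cut_subtree_edges: "edges (cut_subtree v I) = {(a, b) \<in> cut_edges I. a \<in> cut_reach v I}"
  using cut_subtree_nodes[of v I] cut_reach_rtrancl
  unfolding restrict_cut_def subtree_def Let_def cut_edges_def by auto

lemma cut_subtree_simps [simp]:
  "root (cut_subtree v I) = v"
  "gam (cut_subtree v I) = (\<lambda>x. if x \<in> I then CBE else gam T x)"
  "prob (cut_subtree v I) = prob T"
  unfolding restrict_cut_def subtree_def Let_def by (simp_all add: fun_eq_iff)

lemma BEs_cut_subtree: "BEs (cut_subtree v I) = {x \<in> cut_reach v I. x \<notin> I \<and> gam T x = BE}"
  unfolding BEs_def cut_subtree_nodes by auto

lemma CBEs_cut_subtree: "v \<in> N \<Longrightarrow> CBEs (cut_subtree v I) = cut_reach v I \<inter> I"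
  unfolding CBEs_def cut_subtree_nodes using cut_reach_nodes not_CBE by auto

lemma fails_cut_subtree_iff:
  assumes "v \<in> N" and "x \<in> cut_reach v I"
  shows "fails (cut_subtree v I) A C x \<longleftrightarrow> fails (cut_tree I) A C x"
  using assms(2)
proof (induction x rule: wf_induct_rule[OF wf_converse_E])
  case (1 x)
  have "x \<in> N" using 1 cut_reach_nodes assms(1) by blast
  have "\<forall>y. (x, y) \<in> cut_edges I \<longrightarrow> (fails (cut_subtree v I) A C y \<longleftrightarrow> fails (cut_tree I) A C y)"
    using 1 cut_reach_step by (auto simp: cut_edges_def)
  then show ?case
    using 1 \<open>x \<in> N\<close> by (subst (1 2) fails.simps) (auto simp: cut_subtree_nodes cut_subtree_edges)
qed

lemma fails_cut_subtree_root_iff: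
  "v \<in> N \<Longrightarrow> fails (cut_subtree v I) A C v \<longleftrightarrow> fails (cut_tree I) A C v"
  by (simp add: fails_cut_subtree_iff)

lemma fails_cut_tree_cut_iff: "c \<in> K \<Longrightarrow> fails (cut_tree K) A C c \<longleftrightarrow> c \<in> N \<and> c \<in> C"
  by (auto elim: fails.cases intro: fails_CBE)

lemma fails_cut_tree_cong:
  assumes "\<forall>y. (x, y) \<in> E\<^sup>* \<longrightarrow> (y \<in> I1 \<longleftrightarrow> y \<in> I2)"
  shows "fails (cut_tree I1) A C x \<longleftrightarrow> fails (cut_tree I2) A C x"
  using assms
proof (induction x rule: wf_induct_rule[OF wf_converse_E])
  case (1 x)
  have "\<forall>y. (x, y) \<in> E \<longrightarrow> (fails (cut_tree I1) A C y \<longleftrightarrow> fails (cut_tree I2) A C y)"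
    using 1 by (meson converse_iff converse_rtrancl_into_rtrancl)
  then show ?case using 1 by (subst (1 2) fails.simps) (auto simp: cut_edges_def)
qed

lemma fails_cut_tree_Shannon:
  assumes "w \<in> J" and "b \<longleftrightarrow> fails (cut_tree (J - {w})) A C w"
  shows "fails (cut_tree (J - {w})) A C x \<longleftrightarrow>
    fails (cut_tree J) A (if b then insert w C else C - {w}) x"
proof (induction x rule: wf_induct_rule[OF wf_converse_E])
  case (1 x)
  show ?case
  proof (cases "x = w")
    case True
    have "fails (cut_tree J) A (if b then insert w C else C - {w}) w \<longleftrightarrow> w \<in> N \<and> b"
      using assms(1) by (simp add: fails_cut_tree_cut_iff)
    then show ?thesis
      using True assms(2) fails_nodes[of "cut_tree (J - {w})" A C w] by auto
  next
    case False
    then show ?thesis using 1 by (subst (1 2) fails.simps) (auto simp: cut_edges_def)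
  qed
qed

end

section \<open>One substitution step\<close>

context fault_tree
begin

lemma mem_ToDo_v_iff: "x \<in> ToDo_v T v \<longleftrightarrow> x \<in> N \<and> x \<noteq> r \<and> idom T x = v"
  unfolding ToDo_v_def by auto

lemma mem_Iset_iff: "x \<in> Iset T v \<longleftrightarrow> x \<in> N \<and> (v, x) \<in> E\<^sup>+ \<and> (idom T x, v) \<in> E\<^sup>+"
  unfolding Iset_def plt_iff by auto

lemma v_notin_initial_cut: "v \<notin> Iset T v \<union> ToDo_v T v"
  using irrefl_trancl_E idom_above by (fastforce simp: mem_Iset_iff mem_ToDo_v_iff)

text \<open>\<open>h = \<langle>U(T\<^sub>x[K])\<rangle>\<close>, with evaluation taking place in the ambient algebra \<open>A(V)\<close>.\<close>
definition represents :: "'v \<Rightarrow> 'v set \<Rightarrow> 'v sfpoly \<Rightarrow> bool" where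
  "represents x K h \<longleftrightarrow>
     inA (CBEs (cut_subtree x K)) h \<and> (\<forall>C. peval N h C = unrel (cut_subtree x K) C)"

end

text \<open>\<open>S\<close> is the part of \<open>ToDo\<^sub>v\<close> not yet substituted into \<open>g\<^sub>v\<close>, and \<open>w\<close> is substituted next.\<close>
locale substitution_step = fault_tree T for T :: "'v ft" +
  fixes v :: 'v and S :: "'v set" and w :: 'v
  assumes v_node: "v \<in> N"
    and S_subset: "S \<subseteq> ToDo_v T v"
    and S_down_closed: "\<forall>x\<in>ToDo_v T v. \<forall>u\<in>S. (u, x) \<in> E\<^sup>+ \<longrightarrow> x \<in> S"
    and w_in_S: "w \<in> S"
    and w_maximal: "\<forall>u\<in>S. (u, w) \<notin> E\<^sup>+"
begin

abbreviation "J \<equiv> Iset T v \<union> S"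

lemma w_node: "w \<in> N" and w_not_root: "w \<noteq> r" and idom_w: "idom T w = v"
  using w_in_S S_subset by (auto simp: mem_ToDo_v_iff)

lemma v_above_w: "(v, w) \<in> E\<^sup>+"
  using idom_above[OF w_node w_not_root] by (simp add: idom_w)

lemma v_notin_J: "v \<notin> J"
  using v_notin_initial_cut S_subset by blast

lemma w_in_J: "w \<in> J"
  using w_in_S by simp

lemma Iset_w_iff:
  assumes "(w, x) \<in> E\<^sup>*"
  shows "x \<in> Iset T w \<longleftrightarrow> x \<in> J - {w}"
proof (cases "x = w")
  case True
  then show ?thesis using irrefl_trancl_E by (auto simp: mem_Iset_iff)
next
  case False
  then have wx: "(w, x) \<in> E\<^sup>+" using assms by (simp add: rtrancl_eq_or_trancl)
  have x: "x \<in> N" "x \<noteq> r" using trancl_nodes[OF wx] trancl_not_root[OF wx] by auto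
  have vx: "(v, x) \<in> E\<^sup>+" using v_above_w wx by (rule trancl_trans)
  show ?thesis
  proof
    assume "x \<in> Iset T w"
    then have "dominates T (idom T x) w"
      using dominates_ancestor[OF idom_dominates[OF x] assms] by (simp add: mem_Iset_iff)
    then have "(idom T x, v) \<in> E\<^sup>*"
      using idom_least[OF w_node w_not_root] by (simp add: idom_w)
    then consider "idom T x = v" | "(idom T x, v) \<in> E\<^sup>+"
      by (auto simp: rtrancl_eq_or_trancl)
    then show "x \<in> J - {w}"
    proof cases
      case 1
      then have "x \<in> S" using S_down_closed w_in_S wx x by (auto simp: mem_ToDo_v_iff)
      then show ?thesis using False by simp
    next
      case 2
      then show ?thesis using x vx False by (simp add: mem_Iset_iff)
    qed
  next
    assume "x \<in> J - {w}"
    then have "(idom T x, v) \<in> E\<^sup>+ \<or> idom T x = v"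
      using S_subset by (auto simp: mem_Iset_iff mem_ToDo_v_iff)
    then have "(idom T x, w) \<in> E\<^sup>+" using v_above_w by (metis trancl_trans)
    then show "x \<in> Iset T w" using x wx by (simp add: mem_Iset_iff)
  qed
qed

lemma between_v_w_notin_J:
  assumes vy: "(v, y) \<in> E\<^sup>*" and yw: "(y, w) \<in> E\<^sup>+"
  shows "y \<notin> J"
proof
  assume "y \<in> J"
  then have vy': "(v, y) \<in> E\<^sup>+" using vy v_notin_J by (auto simp: rtrancl_eq_or_trancl)
  from \<open>y \<in> J\<close> show False
  proof
    assume "y \<in> Iset T v"
    then have y: "y \<in> N" "y \<noteq> r" and "(idom T y, v) \<in> E\<^sup>+"
      using trancl_not_root[OF vy'] by (auto simp: mem_Iset_iff)
    then have "\<not> dominates T v y"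
      using idom_least trancl_E_asym by blast
    then have "(r, y) \<in> (E_avoid v)\<^sup>*" using vy' by (simp add: dominates_iff)
    moreover have "(y, w) \<in> (E_avoid v)\<^sup>*"
      using rtrancl_E_avoid_below[OF trancl_into_rtrancl[OF yw] vy'] .
    ultimately have "(r, w) \<in> (E_avoid v)\<^sup>*" by (rule rtrancl_trans)
    then show False
      using idom_avoid[OF w_node w_not_root] by (simp add: idom_w)
  next
    assume "y \<in> S"
    then show False using w_maximal yw by blast
  qed
qed

lemma w_in_cut_reach_v: "w \<in> cut_reach v J"
proof -
  have "(v, y) \<in> E\<^sup>* \<Longrightarrow> (y, w) \<in> E\<^sup>* \<Longrightarrow> (v, y) \<in> (cut_edges J)\<^sup>*" for y
  proof (induction rule: rtrancl_induct)
    case (step y z)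
    have yw: "(y, w) \<in> E\<^sup>+" using step.hyps(2) step.prems by (rule rtrancl_into_trancl2)
    then have "(y, z) \<in> cut_edges J"
      using between_v_w_notin_J step.hyps by (simp add: cut_edges_def)
    moreover have "(v, y) \<in> (cut_edges J)\<^sup>*" using step.IH trancl_into_rtrancl[OF yw] .
    ultimately show ?case by (rule rtrancl.rtrancl_into_rtrancl[rotated])
  qed simp
  from this[of w] show ?thesis
    unfolding cut_reach_def using trancl_into_rtrancl[OF v_above_w] by simp
qed

text \<open>Every node of \<open>T\<^sub>w[I\<^sub>w]\<close> is dominated by \<open>w\<close>. By induction from \<open>w\<close> downwards: the
  immediate dominator of such a node lies on every path to it from \<open>w\<close>, hence is again a
  node of \<open>T\<^sub>w[I\<^sub>w]\<close>.\<close>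
lemma cut_reach_w_dominated:
  "(w, y) \<in> (cut_edges (Iset T w))\<^sup>* \<Longrightarrow> y \<notin> Iset T w \<Longrightarrow> y \<noteq> w \<Longrightarrow> (r, y) \<notin> (E_avoid w)\<^sup>*"
proof (induction y rule: wf_induct_rule[OF wf_trancl_E])
  case (1 y)
  have wy: "(w, y) \<in> E\<^sup>+" using 1 rtrancl_cut_edges by (auto simp: rtrancl_eq_or_trancl)
  have y: "y \<in> N" "y \<noteq> r" using trancl_nodes[OF wy] trancl_not_root[OF wy] by auto
  define d where "d = idom T y"
  have dy: "(d, y) \<in> E\<^sup>+" "(r, y) \<notin> (E_avoid d)\<^sup>*"
    using idom_above[OF y] idom_avoid[OF y] unfolding d_def by auto
  have "(d, w) \<notin> E\<^sup>+" using 1(3) wy y unfolding d_def by (auto simp: mem_Iset_iff)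
  show ?case
  proof
    assume ry: "(r, y) \<in> (E_avoid w)\<^sup>*"
    have "d \<noteq> w" using ry dy(2) by blast
    then have "(d, w) \<notin> E\<^sup>*" using \<open>(d, w) \<notin> E\<^sup>+\<close> by (simp add: rtrancl_eq_or_trancl)
    then have "(r, w) \<in> (E_avoid d)\<^sup>*"
      using rtrancl_E_avoid_not_to reachable_from_root[OF w_node] by blast
    then have "(w, y) \<notin> (E_avoid d)\<^sup>*" using dy(2) by (meson rtrancl_trans)
    then have wd: "(w, d) \<in> (cut_edges (Iset T w))\<^sup>*" and dy': "(d, y) \<in> (cut_edges (Iset T w))\<^sup>*"
      using rtrancl_E_avoid_or_through[OF 1(2), of d] by (auto simp: cut_edges_def)
    moreover have "d \<notin> Iset T w"
    proof -
      have "d \<noteq> y" using dy(1) irrefl_trancl_E by blast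
      then obtain z where "(d, z) \<in> cut_edges (Iset T w)" using dy' by (meson rtranclD tranclD)
      then show ?thesis by (simp add: cut_edges_def)
    qed
    ultimately have "(r, d) \<notin> (E_avoid w)\<^sup>*" using 1(1) dy(1) \<open>d \<noteq> w\<close> by blast
    moreover have "r \<noteq> d" using calculation by blast
    ultimately show False
      using rtrancl_E_avoid_or_through[OF ry E_avoid_subset, of d] dy(2) by blast
  qed
qed

lemma cut_reach_w_disjoint:
  assumes x: "x \<in> cut_reach w (Iset T w)" "x \<notin> Iset T w" "x \<noteq> w"
  shows "x \<notin> cut_reach v J"
proof
  assume "x \<in> cut_reach v J"
  moreover have "(w, x) \<notin> (cut_edges J)\<^sup>*"
  proof
    assume "(w, x) \<in> (cut_edges J)\<^sup>*"
    then obtain z where "(w, z) \<in> cut_edges J" using x(3) by (metis rtranclD tranclD)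
    then show False using w_in_J by (simp add: cut_edges_def)
  qed
  ultimately have "(v, x) \<in> (E_avoid w)\<^sup>*"
    using rtrancl_E_avoid_or_through[of v x "cut_edges J" w] unfolding cut_reach_def cut_edges_def
    by blast
  moreover have "(r, v) \<in> (E_avoid w)\<^sup>*"
    using rtrancl_E_avoid_above[OF reachable_from_root[OF v_node] v_above_w] .
  moreover have "(r, x) \<notin> (E_avoid w)\<^sup>*"
    using cut_reach_w_dominated x unfolding cut_reach_def by blast
  ultimately show False by (meson rtrancl_trans)
qed

lemma cut_reach_w_eq: "cut_reach w (Iset T w) = cut_reach w (J - {w})"
  by (rule cut_reach_cong) (use Iset_w_iff in blast)

lemma cut_reach_remove_w:
  "x \<in> cut_reach v (J - {w}) \<Longrightarrow> x \<in> cut_reach v J \<or> x \<in> cut_reach w (J - {w})"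
  unfolding cut_reach_def mem_Collect_eq
proof (induction rule: rtrancl_induct)
  case (step y z)
  then show ?case
    by (cases "y = w") (auto simp: cut_edges_def intro: rtrancl.rtrancl_into_rtrancl)
qed simp

abbreviation "Tv \<equiv> cut_subtree v J"
abbreviation "Tv' \<equiv> cut_subtree v (J - {w})"
abbreviation "Tw \<equiv> cut_subtree w (Iset T w)"

lemma fails_Tv'_Shannon:
  "fails Tv' A C v \<longleftrightarrow> fails Tv A (if fails Tw A C w then insert w C else C - {w}) v"
proof -
  have "fails Tw A C w \<longleftrightarrow> fails (cut_tree (J - {w})) A C w"
    using fails_cut_subtree_root_iff[OF w_node] fails_cut_tree_cong Iset_w_iff by blast
  then show ?thesis
    using fails_cut_subtree_root_iff[OF v_node] fails_cut_tree_Shannon[OF w_in_J] by blast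
qed

lemma BEs_Tv'_subset: "BEs Tv' \<subseteq> BEs Tv \<union> BEs Tw"
proof
  fix x assume "x \<in> BEs Tv'"
  then have x: "x \<in> cut_reach v (J - {w})" "x \<notin> J - {w}" "gam T x = BE"
    by (auto simp: BEs_cut_subtree)
  show "x \<in> BEs Tv \<union> BEs Tw"
  proof (cases "x = w")
    case True
    then show ?thesis using x irrefl_trancl_E by (auto simp: BEs_cut_subtree mem_Iset_iff)
  next
    case False
    from cut_reach_remove_w[OF x(1)] show ?thesis
    proof
      assume "x \<in> cut_reach v J"
      then show ?thesis using x False by (simp add: BEs_cut_subtree)
    next
      assume "x \<in> cut_reach w (J - {w})"
      then have "x \<in> cut_reach w (Iset T w)" by (simp add: cut_reach_w_eq)
      moreover have "x \<notin> Iset T w"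
        using Iset_w_iff[OF cut_reach_rtrancl[OF calculation]] x(2) by blast
      ultimately show ?thesis using x by (simp add: BEs_cut_subtree)
    qed
  qed
qed

lemma BEs_Tv_Tw_disjoint: "BEs Tv \<inter> BEs Tw = {}"
  using cut_reach_w_disjoint w_in_J by (fastforce simp: BEs_cut_subtree)

lemma finite_BEs: "finite (BEs Tv)" "finite (BEs Tw)"
  using finite_cut_reach[OF v_node] finite_cut_reach[OF w_node]
  by (auto simp: BEs_cut_subtree)

lemma unrel_Tv'_Shannon:
  "unrel Tv' C = unrel Tw C * unrel Tv (insert w C) + (1 - unrel Tw C) * unrel Tv (C - {w})"
proof -
  let ?p = "prob T" and ?Bv = "BEs Tv" and ?Bw = "BEs Tw"
  let ?i = "\<lambda>b. if b then 1 else 0 :: real"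
  define C' where "C' A = (if fails Tw A C w then insert w C else C - {w})" for A
  have fails_Un: "fails Tv' (A1 \<union> A2) C v \<longleftrightarrow> fails Tv A1 (C' A2) v"
    if "A1 \<subseteq> ?Bv" "A2 \<subseteq> ?Bw" for A1 A2
  proof -
    have "fails Tv (A1 \<union> A2) D v \<longleftrightarrow> fails Tv A1 D v" for D
      using that BEs_Tv_Tw_disjoint by (intro fails_cong_BEs) auto
    moreover have "fails Tw (A1 \<union> A2) C w \<longleftrightarrow> fails Tw A2 C w"
      using that BEs_Tv_Tw_disjoint by (intro fails_cong_BEs) auto
    ultimately show ?thesis
      unfolding fails_Tv'_Shannon C'_def by simp
  qed
  have "unrel Tv' C = (\<Sum>A\<in>Pow (BEs Tv'). weight ?p (BEs Tv') A * ?i (fails Tv' A C v))"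
    by (simp add: unrel_eq_sum_weight)
  also have "\<dots> = (\<Sum>A\<in>Pow (?Bv \<union> ?Bw). weight ?p (?Bv \<union> ?Bw) A * ?i (fails Tv' A C v))"
    by (rule sum_weight_marginal[symmetric])
      (use finite_BEs BEs_Tv'_subset in \<open>auto simp: fails_Int_BEs_iff\<close>)
  also have "\<dots> = (\<Sum>A2\<in>Pow ?Bw. weight ?p ?Bw A2 *
      (\<Sum>A1\<in>Pow ?Bv. weight ?p ?Bv A1 * ?i (fails Tv' (A1 \<union> A2) C v)))"
    by (rule sum_weight_Un) (use finite_BEs BEs_Tv_Tw_disjoint in auto)
  also have "\<dots> = (\<Sum>A2\<in>Pow ?Bw. weight ?p ?Bw A2 * unrel Tv (C' A2))"
  proof (rule sum.cong[OF refl])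
    fix A2 assume "A2 \<in> Pow ?Bw"
    then have "(\<Sum>A1\<in>Pow ?Bv. weight ?p ?Bv A1 * ?i (fails Tv' (A1 \<union> A2) C v)) =
        (\<Sum>A1\<in>Pow ?Bv. weight ?p ?Bv A1 * ?i (fails Tv A1 (C' A2) v))"
      using fails_Un by (intro sum.cong refl) auto
    then show "weight ?p ?Bw A2 * (\<Sum>A1\<in>Pow ?Bv. weight ?p ?Bv A1 * ?i (fails Tv' (A1 \<union> A2) C v)) =
        weight ?p ?Bw A2 * unrel Tv (C' A2)"
      by (simp add: unrel_eq_sum_weight)
  qed
  also have "\<dots> = (\<Sum>A\<in>Pow ?Bw. weight ?p ?Bw A *
      (if fails Tw A C w then unrel Tv (insert w C) else unrel Tv (C - {w})))"
    unfolding C'_def by (intro sum.cong refl) simp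
  also have "\<dots> = unrel Tw C * unrel Tv (insert w C) + (1 - unrel Tw C) * unrel Tv (C - {w})"
  proof -
    have "unrel Tw C = (\<Sum>A\<in>Pow ?Bw. weight ?p ?Bw A * ?i (fails Tw A C w))"
      by (simp add: unrel_eq_sum_weight)
    then show ?thesis
      using sum_weight_if[OF finite_BEs(2), of ?p "\<lambda>A. fails Tw A C w"
          "unrel Tv (insert w C)" "unrel Tv (C - {w})"]
      by simp
  qed
  finally show ?thesis .
qed

lemma represents_psubst:
  assumes "represents v J g" and "represents w (Iset T w) h"
  shows "represents v (J - {w}) (psubst g w h)"
proof -
  have "CBEs Tv - {w} \<subseteq> CBEs Tv'"
    using cut_reach_antimono[of "J - {w}" J v] by (auto simp: CBEs_cut_subtree[OF v_node])
  moreover have "CBEs Tw \<subseteq> CBEs Tv'"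
  proof
    fix x assume "x \<in> CBEs Tw"
    then have x: "x \<in> cut_reach w (Iset T w)" "x \<in> Iset T w"
      by (simp_all add: CBEs_cut_subtree[OF w_node])
    have "w \<in> cut_reach v (J - {w})"
      using w_in_cut_reach_v cut_reach_antimono[of "J - {w}" J v] by blast
    moreover have "x \<in> cut_reach w (J - {w})" using x(1) cut_reach_w_eq by simp
    ultimately have "x \<in> cut_reach v (J - {w})" by (rule cut_reach_trans)
    moreover have "x \<in> J - {w}" using Iset_w_iff[OF cut_reach_rtrancl[OF x(1)]] x(2) by simp
    ultimately show "x \<in> CBEs Tv'" by (simp add: CBEs_cut_subtree[OF v_node])
  qed
  moreover have "inA (CBEs Tv - {w} \<union> CBEs Tw) (psubst g w h)"
    by (rule inA_psubst) (use assms in \<open>simp_all add: represents_def\<close>)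
  ultimately have "inA (CBEs Tv') (psubst g w h)"
    by (meson Un_least inA_mono)
  moreover have "peval N (psubst g w h) C = unrel Tv' C" for C
    using assms peval_psubst[OF finite_N w_node] unrel_Tv'_Shannon unfolding represents_def by simp
  ultimately show ?thesis unfolding represents_def by blast
qed

end

section \<open>The loops of SFPA\<close>

lemma peval_init_poly:
  assumes "finite X" and "children T v \<subseteq> X" and "finite (children T v)"
  shows "peval X (init_poly T v) C =
    (if gam T v = OR then (if children T v \<inter> C \<noteq> {} then 1 else 0)
     else (if children T v \<subseteq> C then 1 else 0))"
proof -
  have "peval X (pvar c) C = (if c \<in> C then 1 else 0)" if "c \<in> children T v" for c
    using peval_var[OF assms(1)] assms(2) that by blast
  then show ?thesis
    unfolding init_poly_def using assms
    by (simp add: peval_psub peval_const peval_pprod prod_indicator prod_one_minus_indicator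
        cong: prod.cong)
qed

lemma inA_init_poly:
  assumes "finite (children T v)"
  shows "inA (children T v) (init_poly T v)"
proof -
  have "inA (children T v) (pvar c)" "inA (children T v) (psub (pconst 1) (pvar c))"
    if "c \<in> children T v" for c
    using that inA_mono[OF inA_var] inA_mono[OF inA_sub[OF inA_const inA_var]] by auto
  then have "inA (children T v) (pprod pvar (children T v))"
    and "inA (children T v) (pprod (\<lambda>w. psub (pconst 1) (pvar w)) (children T v))"
    by (auto intro: inA_pprod[OF assms])
  then show ?thesis
    unfolding init_poly_def using inA_sub[OF inA_const, of "children T v"] by simp
qed

context fault_tree
begin

lemma inner_run_represents:
  "inner_run T g S acc res \<Longrightarrow> v \<in> N \<Longrightarrow> S \<subseteq> ToDo_v T v \<Longrightarrow>
   (\<forall>x\<in>ToDo_v T v. \<forall>u\<in>S. (u, x) \<in> E\<^sup>+ \<longrightarrow> x \<in> S) \<Longrightarrow>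
   represents v (Iset T v \<union> S) acc \<Longrightarrow> (\<forall>w\<in>ToDo_v T v. represents w (Iset T w) (g w)) \<Longrightarrow>
   represents v (Iset T v) res"
proof (induction rule: inner_run.induct)
  case (inner_step w S acc res)
  interpret substitution_step T v S w
    by unfold_locales
      (use is_ft inner_step.hyps(1,2) inner_step.prems(1-3) in \<open>auto simp: plt_iff\<close>)
  have "represents w (Iset T w) (g w)"
    using inner_step.prems(5) S_subset w_in_S by blast
  then have "represents v (J - {w}) (psubst acc w (g w))"
    using represents_psubst inner_step.prems(4) by blast
  moreover have "J - {w} = Iset T v \<union> (S - {w})"
    using idom_w irrefl_trancl_E by (auto simp: mem_Iset_iff)
  ultimately have acc': "represents v (Iset T v \<union> (S - {w})) (psubst acc w (g w))"
    by simp
  have "S - {w} \<subseteq> ToDo_v T v" using S_subset by blast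
  moreover have "\<forall>x\<in>ToDo_v T v. \<forall>u\<in>S - {w}. (u, x) \<in> E\<^sup>+ \<longrightarrow> x \<in> S - {w}"
    using inner_step.prems(3) w_maximal by blast
  ultimately show ?case
    using inner_step.IH[OF v_node _ _ acc' inner_step.prems(5)] by blast
qed simp

lemma children_in_initial_cut:
  assumes "v \<in> N" and "c \<in> children T v"
  shows "c \<in> Iset T v \<union> ToDo_v T v"
proof -
  have vc: "(v, c) \<in> E" using assms(2) by (simp add: children_def)
  then have c: "c \<in> N" "c \<noteq> r" using edge_nodes trancl_not_root[of v c] by auto
  have "(idom T c, v) \<in> E\<^sup>*"
  proof (rule ccontr)
    assume "(idom T c, v) \<notin> E\<^sup>*"
    then have "(r, v) \<in> (E_avoid (idom T c))\<^sup>*" "(v, c) \<in> E_avoid (idom T c)"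
      using rtrancl_E_avoid_not_to[OF reachable_from_root[OF assms(1)]] vc idom_above[OF c]
        irrefl_trancl_E
      by (auto simp: E_avoid_def)
    then show False
      using idom_avoid[OF c] by (meson rtrancl.rtrancl_into_rtrancl)
  qed
  then show ?thesis
    using c vc by (auto simp: mem_Iset_iff mem_ToDo_v_iff rtrancl_eq_or_trancl)
qed

lemma cut_reach_initial:
  assumes "v \<in> N"
  shows "cut_reach v (Iset T v \<union> ToDo_v T v) = insert v (children T v)"
proof
  let ?K = "Iset T v \<union> ToDo_v T v"
  show "cut_reach v ?K \<subseteq> insert v (children T v)"
  proof
    fix x assume "x \<in> cut_reach v ?K"
    then have "(v, x) \<in> (cut_edges ?K)\<^sup>*" by (simp add: cut_reach_def)
    then show "x \<in> insert v (children T v)"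
    proof (induction rule: rtrancl_induct)
      case (step y z)
      then have "y = v" using children_in_initial_cut[OF assms] by (auto simp: cut_edges_def)
      then show ?case using step by (simp add: cut_edges_def children_def)
    qed simp
  qed
  show "insert v (children T v) \<subseteq> cut_reach v ?K"
    using v_notin_initial_cut[of v] cut_reach_step[OF cut_reach_self]
    by (auto simp: cut_edges_def children_def)
qed

lemma fails_initial_cut_iff:
  assumes "v \<in> N" and "gam T v \<noteq> BE"
  shows "fails (cut_tree (Iset T v \<union> ToDo_v T v)) A C v \<longleftrightarrow>
    (if gam T v = OR then children T v \<inter> C \<noteq> {} else children T v \<subseteq> C)"
proof -
  let ?K = "Iset T v \<union> ToDo_v T v"
  have "fails (cut_tree ?K) A C c \<longleftrightarrow> c \<in> C" if "c \<in> children T v" for c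
    using fails_cut_tree_cut_iff[OF children_in_initial_cut[OF assms(1) that]] that edge_nodes
    by (auto simp: children_def)
  moreover have "gam T v = OR \<or> gam T v = AND"
    using assms not_CBE by (cases "gam T v") auto
  ultimately show ?thesis
    using assms v_notin_initial_cut[of v]
    by (subst fails.simps) (auto simp: cut_edges_def children_def)
qed

lemma represents_init_poly:
  assumes "v \<in> N" and "gam T v \<noteq> BE"
  shows "represents v (Iset T v \<union> ToDo_v T v) (init_poly T v)"
proof -
  let ?K = "Iset T v \<union> ToDo_v T v"
  have "children T v \<subseteq> N" using edge_nodes by (auto simp: children_def)
  then have children: "children T v \<subseteq> N" "finite (children T v)"
    using finite_N finite_subset by auto
  have "BEs (cut_subtree v ?K) = {}" "CBEs (cut_subtree v ?K) = children T v"
    using assms cut_reach_initial children_in_initial_cut v_notin_initial_cut[of v]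
    by (auto simp: BEs_cut_subtree CBEs_cut_subtree)
  moreover have "unrel (cut_subtree v ?K) C = peval N (init_poly T v) C" for C
    using calculation assms peval_init_poly[OF finite_N children]
    by (simp add: unrel_def fails_cut_subtree_root_iff fails_initial_cut_iff)
  ultimately show ?thesis
    unfolding represents_def using inA_init_poly children by simp
qed

lemma represents_BE:
  assumes "v \<in> N" and "gam T v = BE"
  shows "represents v (Iset T v) (pconst (prob T v))"
proof -
  let ?I = "Iset T v"
  have "v \<notin> ?I" using irrefl_trancl_E by (auto simp: mem_Iset_iff)
  have "children T v = {}" using leaf_iff[OF assms(1)] assms(2) by simp
  have "(v, x) \<in> (cut_edges ?I)\<^sup>* \<Longrightarrow> x = v" for x
    by (induction rule: rtrancl_induct)
      (use \<open>children T v = {}\<close> in \<open>auto simp: cut_edges_def children_def\<close>)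
  then have reach: "cut_reach v ?I = {v}"
    unfolding cut_reach_def by auto
  then have "BEs (cut_subtree v ?I) = {v}" "CBEs (cut_subtree v ?I) = {}"
    using \<open>v \<notin> ?I\<close> assms by (auto simp: BEs_cut_subtree CBEs_cut_subtree)
  moreover have "fails (cut_subtree v ?I) A C v \<longleftrightarrow> v \<in> A" for A C
    using reach \<open>v \<notin> ?I\<close> assms by (subst fails.simps) (auto simp: cut_subtree_nodes)
  moreover have "Pow {v} = {{}, {v}}" by auto
  ultimately have "unrel (cut_subtree v ?I) C = prob T v" for C
    by (simp add: unrel_def)
  then show ?thesis
    unfolding represents_def using \<open>CBEs _ = {}\<close> inA_const peval_const[OF finite_N] by simp
qed

text \<open>Invariant of the outer loop: the nodes already processed are closed under descendants
  and carry their correct values.\<close>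
lemma sfpa_run_represents:
  "sfpa_run T ToDo g g' \<Longrightarrow> ToDo \<subseteq> N \<Longrightarrow> (\<forall>x\<in>N - ToDo. \<forall>y. (x, y) \<in> E\<^sup>+ \<longrightarrow> y \<notin> ToDo) \<Longrightarrow>
   (\<forall>x\<in>N - ToDo. represents x (Iset T x) (g x)) \<Longrightarrow> (\<forall>x\<in>N. represents x (Iset T x) (g' x))"
proof (induction rule: sfpa_run.induct)
  case (sfpa_BE v ToDo g g')
  have v: "v \<in> N" and below: "\<forall>y. (v, y) \<in> E\<^sup>+ \<longrightarrow> y \<notin> ToDo"
    using sfpa_BE.hyps(1,2) sfpa_BE.prems(1) by (auto simp: plt_iff)
  show ?case
  proof (rule sfpa_BE.IH)
    show "ToDo - {v} \<subseteq> N" using sfpa_BE.prems(1) by blast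
    show "\<forall>x\<in>N - (ToDo - {v}). \<forall>y. (x, y) \<in> E\<^sup>+ \<longrightarrow> y \<notin> ToDo - {v}"
      using sfpa_BE.prems(2) below by blast
    show "\<forall>x\<in>N - (ToDo - {v}). represents x (Iset T x) ((g(v := pconst (prob T v))) x)"
      using sfpa_BE.prems(3) represents_BE[OF v sfpa_BE.hyps(3)] by auto
  qed
next
  case (sfpa_gate v ToDo g h g')
  have v: "v \<in> N" and below: "\<forall>y. (v, y) \<in> E\<^sup>+ \<longrightarrow> y \<notin> ToDo"
    using sfpa_gate.hyps(1,2) sfpa_gate.prems(1) by (auto simp: plt_iff)
  have "represents w (Iset T w) (g w)" if "w \<in> ToDo_v T v" for w
  proof -
    have "w \<in> N" "(v, w) \<in> E\<^sup>+"
      using that idom_above[of w] by (auto simp: mem_ToDo_v_iff)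
    then show ?thesis using sfpa_gate.prems(3) below by blast
  qed
  then have "represents v (Iset T v) h"
    using inner_run_represents[OF sfpa_gate.hyps(4) v] represents_init_poly[OF v sfpa_gate.hyps(3)]
    by blast
  show ?case
  proof (rule sfpa_gate.IH)
    show "ToDo - {v} \<subseteq> N" using sfpa_gate.prems(1) by blast
    show "\<forall>x\<in>N - (ToDo - {v}). \<forall>y. (x, y) \<in> E\<^sup>+ \<longrightarrow> y \<notin> ToDo - {v}"
      using sfpa_gate.prems(2) below by blast
    show "\<forall>x\<in>N - (ToDo - {v}). represents x (Iset T x) ((g(v := h)) x)"
      using sfpa_gate.prems(3) \<open>represents v (Iset T v) h\<close> by auto
  qed
qed simp

lemma poly_of_represents:
  assumes "x \<in> N" and "represents x K h"
  shows "poly_of (CBEs (cut_subtree x K)) (unrel (cut_subtree x K)) = h"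
proof -
  have sub: "CBEs (cut_subtree x K) \<subseteq> N"
    using CBEs_cut_subtree[OF assms(1)] cut_reach_nodes[OF assms(1)] by blast
  then have "finite (CBEs (cut_subtree x K))" using finite_N finite_subset by blast
  then show ?thesis
    using assms(2) peval_superset[OF _ sub finite_N] unfolding represents_def
    by (intro poly_of_eq) auto
qed

end

theorem theorem28:
  fixes T :: "'v ft" and g0 g :: "'v \<Rightarrow> 'v sfpoly" and v :: 'v
  assumes "is_ft T"
    and "sfpa_run T (nodes T) g0 g"
    and "v \<in> nodes T"
  shows "g v = poly_of (CBEs (restrict_cut (subtree T v) (Iset T v)))
                       (unrel (restrict_cut (subtree T v) (Iset T v)))"
proof -
  interpret fault_tree T by unfold_locales (rule assms(1))
  have "represents v (Iset T v) (g v)"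
    using sfpa_run_represents[OF assms(2)] assms(3) by blast
  then show ?thesis
    using poly_of_represents[OF assms(3)] by simp
qed

end
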